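(* Let $\gamma>0$, $\tau\ge 1$, and let $\xi$ be an irrational number with continued fraction expansion $\xi=[a_0;a_1,a_2,\dots]$, convergents $p_k/q_k=[a_0;a_1,\dots,a_k]$ (in lowest terms, $q_k\ge 1$), and complete quotients $a'_k:=[a_k;a_{k+1},a_{k+2},\dots]$. Then $\xi\in D_{\gamma,\tau}$ if and only if $$\frac{q_{k+1}}{q_k^{\tau}}+\frac{1}{a'_{k+2}\,q_k^{\tau-1}}\le\frac1\gamma\qquad\text{for all }k\ge 0.$$
   Context: For $\gamma>0$ and $\tau\ge 1$, the Diophantine set $D_{\gamma,\tau}$ is the set of all real numbers $\xi$ such that $|\xi q-p|\ge \gamma/q^{\tau}$ for all $p\in\mathbb{Z}$ and all $q\in\mathbb{N}=\{1,2,3,\dots\}$. Continued fraction expansions use the standard conventions: $a_0\in\mathbb{Z}$, $a_i\in\mathbb{N}$ for $i\ge1$, $p_{-1}=1$, $q_{-1}=0$, $p_0=a_0$, $q_0=1$, and $p_{k+1}=a_{k+1}p_k+p_{k-1}$, $q_{k+1}=a_{k+1}q_k+q_{k-1}$. *)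

theory Defs
  imports Complex_Main
begin

definition diophantine_set :: "real \<Rightarrow> real \<Rightarrow> real set" where
  "diophantine_set \<gamma> \<tau> =
     {\<xi>. \<forall>p::int. \<forall>q::nat. q \<ge> 1 \<longrightarrow> \<bar>\<xi> * real q - real_of_int p\<bar> \<ge> \<gamma> / (real q powr \<tau>)}"

fun cf_complete :: "real \<Rightarrow> nat \<Rightarrow> real" where
  "cf_complete \<xi> 0 = \<xi>"
| "cf_complete \<xi> (Suc k) = 1 / (cf_complete \<xi> k - of_int \<lfloor>cf_complete \<xi> k\<rfloor>)"

definition cf_a :: "real \<Rightarrow> nat \<Rightarrow> int" where
  "cf_a \<xi> k = \<lfloor>cf_complete \<xi> k\<rfloor>"

text \<open>Denominators q_k via q_{-1}=0, q_0 = 1, q_{k+1} = a_{k+1} q_k + q_{k-1}.\<close>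
fun cf_q :: "real \<Rightarrow> nat \<Rightarrow> int" where
  "cf_q \<xi> 0 = 1"
| "cf_q \<xi> (Suc 0) = cf_a \<xi> 1"
| "cf_q \<xi> (Suc (Suc k)) = cf_a \<xi> (k + 2) * cf_q \<xi> (Suc k) + cf_q \<xi> k"

text \<open>Numerators p_k via p_{-1}=1, p_0 = a_0, p_{k+1} = a_{k+1} p_k + p_{k-1}.\<close>
fun cf_p :: "real \<Rightarrow> nat \<Rightarrow> int" where
  "cf_p \<xi> 0 = cf_a \<xi> 0"
| "cf_p \<xi> (Suc 0) = cf_a \<xi> 1 * cf_a \<xi> 0 + 1"
| "cf_p \<xi> (Suc (Suc k)) = cf_a \<xi> (k + 2) * cf_p \<xi> (Suc k) + cf_p \<xi> k"

end

theory Submission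
  imports Defs
begin

text \<open>For irrational \<xi> the complete quotients give the exact identity
  q_k \<xi> - p_k = (-1)^k / (q_k a'_{k+1} + q_{k-1}), and this denominator equals
  q_{k+1} + q_k / a'_{k+2}. After clearing denominators the k-th condition of the theorem
  therefore says precisely that \<gamma> / q_k^\<tau> \<le> |q_k \<xi> - p_k|. Conversely, the Diophantine
  inequality only has to be checked at convergents: if q_k \<le> q < q_{k+1}, the best
  approximation property gives |q \<xi> - p| \<ge> |q_k \<xi> - p_k|, while \<gamma> / q^\<tau> \<le> \<gamma> / q_k^\<tau>.\<close>

text \<open>Convergent denominators and numerators shifted by one index:
  conv_den \<xi> (Suc k) = q_k and conv_den \<xi> 0 = q_{-1} = 0 (likewise p_{-1} = 1),
  so that a single recurrence covers all indices.\<close>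

fun conv_den :: "real \<Rightarrow> nat \<Rightarrow> int" where
  "conv_den \<xi> 0 = 0"
| "conv_den \<xi> (Suc 0) = 1"
| "conv_den \<xi> (Suc (Suc n)) = cf_a \<xi> (Suc n) * conv_den \<xi> (Suc n) + conv_den \<xi> n"

fun conv_num :: "real \<Rightarrow> nat \<Rightarrow> int" where
  "conv_num \<xi> 0 = 1"
| "conv_num \<xi> (Suc 0) = cf_a \<xi> 0"
| "conv_num \<xi> (Suc (Suc n)) = cf_a \<xi> (Suc n) * conv_num \<xi> (Suc n) + conv_num \<xi> n"

lemma cf_q_eq_conv_den: "cf_q \<xi> k = conv_den \<xi> (Suc k)"
  by (induction \<xi> k rule: cf_q.induct) simp_all

lemma conv_num_den_det:
  "conv_num \<xi> (Suc n) * conv_den \<xi> n - conv_num \<xi> n * conv_den \<xi> (Suc n) = (-1) ^ Suc n"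
  by (induction n) (simp_all add: algebra_simps)

lemma cf_complete_eq: "cf_complete \<xi> n = of_int (cf_a \<xi> n) + 1 / cf_complete \<xi> (Suc n)"
  by (simp add: cf_a_def)

declare cf_complete.simps(2) [simp del]

lemma frac_part_nonzero_if_irrational:
  assumes "x \<notin> \<rat>" shows "x - of_int \<lfloor>x\<rfloor> \<noteq> 0"
  using assms by (metis Rats_of_int eq_iff_diff_eq_0)

lemma cf_complete_irrational:
  assumes "\<xi> \<notin> \<rat>" shows "cf_complete \<xi> n \<notin> \<rat>"
proof (induction n)
  case 0
  then show ?case using assms by simp
next
  case (Suc n)
  let ?x = "cf_complete \<xi> n"
  show ?case
  proof
    assume "cf_complete \<xi> (Suc n) \<in> \<rat>"
    then have "1 / cf_complete \<xi> (Suc n) + of_int \<lfloor>?x\<rfloor> \<in> \<rat>"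
      by (intro Rats_add Rats_divide Rats_1 Rats_of_int)
    with Suc show False by (simp add: cf_complete.simps)
  qed
qed

lemma cf_complete_gt_1:
  assumes "\<xi> \<notin> \<rat>" shows "cf_complete \<xi> (Suc n) > 1"
proof -
  let ?x = "cf_complete \<xi> n"
  have "0 < ?x - of_int \<lfloor>?x\<rfloor>" "?x - of_int \<lfloor>?x\<rfloor> < 1"
    using frac_part_nonzero_if_irrational[OF cf_complete_irrational[OF assms]]
    by (smt (verit) of_int_floor_le) linarith
  then show ?thesis by (simp add: cf_complete.simps)
qed

lemma cf_a_pos:
  assumes "\<xi> \<notin> \<rat>" shows "cf_a \<xi> (Suc n) \<ge> 1"
  using cf_complete_gt_1[OF assms, of n] unfolding cf_a_def by linarith

lemma conv_den_pos:
  assumes "\<xi> \<notin> \<rat>" shows "conv_den \<xi> (Suc n) \<ge> 1"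
proof (induction n rule: less_induct)
  case (less n)
  show ?case
  proof (cases n)
    case (Suc m)
    have "conv_den \<xi> m \<ge> 0"
      using less[of "m - 1"] Suc by (cases m) auto
    moreover have "conv_den \<xi> (Suc m) \<le> cf_a \<xi> (Suc m) * conv_den \<xi> (Suc m)"
      using less[of m] Suc mult_right_mono[OF cf_a_pos[OF assms, of m], of "conv_den \<xi> (Suc m)"]
      by simp
    moreover have "conv_den \<xi> (Suc n) = cf_a \<xi> (Suc m) * conv_den \<xi> (Suc m) + conv_den \<xi> m"
      using Suc by simp
    ultimately show ?thesis
      using less[of m] Suc by linarith
  qed simp
qed

lemma conv_den_nonneg:
  assumes "\<xi> \<notin> \<rat>" shows "conv_den \<xi> n \<ge> 0"
  using conv_den_pos[OF assms] by (cases n) (auto intro: order_trans[of 0 1])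

lemma conv_den_ge_index:
  assumes "\<xi> \<notin> \<rat>" shows "int n \<le> conv_den \<xi> (Suc n)"
proof (induction n rule: less_induct)
  case (less n)
  show ?case
  proof (cases n)
    case (Suc m)
    have "conv_den \<xi> (Suc m) \<le> cf_a \<xi> (Suc m) * conv_den \<xi> (Suc m)"
      using mult_right_mono[OF cf_a_pos[OF assms, of m], of "conv_den \<xi> (Suc m)"]
        conv_den_pos[OF assms, of m] by simp
    moreover have "int m + 1 \<le> conv_den \<xi> (Suc m) + conv_den \<xi> m"
      using less[of m] Suc conv_den_pos[OF assms, of "m - 1"] by (cases m) auto
    moreover have "conv_den \<xi> (Suc n) = cf_a \<xi> (Suc m) * conv_den \<xi> (Suc m) + conv_den \<xi> m"
      using Suc by simp
    ultimately show ?thesis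
      using Suc by linarith
  qed simp
qed

lemma conv_den_bracket:
  assumes "\<xi> \<notin> \<rat>" and "q \<ge> 1"
  obtains k where "conv_den \<xi> (Suc k) \<le> q" and "q < conv_den \<xi> (Suc (Suc k))"
proof -
  let ?P = "\<lambda>k. q < conv_den \<xi> (Suc k)"
  have "?P (Suc (nat q))"
    using conv_den_ge_index[OF assms(1), of "Suc (nat q)"] assms(2) by simp
  moreover have "\<not> ?P 0" using assms(2) by simp
  ultimately obtain k where "\<not> ?P k" "?P (Suc k)"
    using exists_least_lemma[of ?P] by blast
  then show ?thesis using that by (simp only: not_less)
qed

lemma conv_identity:
  assumes "\<xi> \<notin> \<rat>"
  shows "\<xi> * (of_int (conv_den \<xi> (Suc n)) * cf_complete \<xi> (Suc n) + of_int (conv_den \<xi> n))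
       = of_int (conv_num \<xi> (Suc n)) * cf_complete \<xi> (Suc n) + of_int (conv_num \<xi> n)"
proof (induction n)
  case 0
  then show ?case
    using frac_part_nonzero_if_irrational[OF assms] by (simp add: cf_a_def cf_complete.simps field_simps)
next
  case (Suc n)
  define y where "y = cf_complete \<xi> (Suc (Suc n))"
  define a where "a = real_of_int (cf_a \<xi> (Suc n))"
  have "y \<noteq> 0" using cf_complete_gt_1[OF assms] y_def by (metis not_one_less_zero)
  have "cf_complete \<xi> (Suc n) = a + 1 / y"
    using cf_complete_eq[of \<xi> "Suc n"] unfolding y_def a_def .
  with Suc.IH have "\<xi> * (of_int (conv_den \<xi> (Suc n)) * (a + 1 / y) + of_int (conv_den \<xi> n))
      = of_int (conv_num \<xi> (Suc n)) * (a + 1 / y) + of_int (conv_num \<xi> n)"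
    by simp
  with \<open>y \<noteq> 0\<close> show ?case
    by (simp add: y_def [symmetric] a_def [symmetric] field_simps)
qed

definition conv_err_den :: "real \<Rightarrow> nat \<Rightarrow> real" where
  "conv_err_den \<xi> k = of_int (conv_den \<xi> (Suc k)) * cf_complete \<xi> (Suc k) + of_int (conv_den \<xi> k)"

lemma conv_err_den_pos:
  assumes "\<xi> \<notin> \<rat>" shows "conv_err_den \<xi> k > 0"
proof -
  have "of_int (conv_den \<xi> (Suc k)) * cf_complete \<xi> (Suc k) > 0"
    using conv_den_pos[OF assms, of k] cf_complete_gt_1[OF assms, of k]
    by simp
  then show ?thesis
    using conv_den_nonneg[OF assms, of k] unfolding conv_err_den_def by linarith
qed

lemma conv_err_den_eq:
  "conv_err_den \<xi> k = of_int (conv_den \<xi> (Suc (Suc k)))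
     + of_int (conv_den \<xi> (Suc k)) / cf_complete \<xi> (Suc (Suc k))"
  unfolding conv_err_den_def by (subst cf_complete_eq) (simp add: algebra_simps)

lemma conv_error:
  assumes "\<xi> \<notin> \<rat>"
  shows "(of_int (conv_den \<xi> (Suc k)) * \<xi> - of_int (conv_num \<xi> (Suc k))) * conv_err_den \<xi> k
         = (-1) ^ k"
proof -
  let ?x = "cf_complete \<xi> (Suc k)"
  let ?P1 = "conv_num \<xi> (Suc k)" and ?P0 = "conv_num \<xi> k"
  let ?Q1 = "conv_den \<xi> (Suc k)" and ?Q0 = "conv_den \<xi> k"
  have "(of_int ?Q1 * \<xi> - of_int ?P1) * conv_err_den \<xi> k
        = of_int ?Q1 * (\<xi> * (of_int ?Q1 * ?x + of_int ?Q0)) - of_int ?P1 * (of_int ?Q1 * ?x + of_int ?Q0)"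
    unfolding conv_err_den_def by (simp add: algebra_simps)
  also have "\<dots> = of_int ?Q1 * (of_int ?P1 * ?x + of_int ?P0) - of_int ?P1 * (of_int ?Q1 * ?x + of_int ?Q0)"
    by (simp only: conv_identity[OF assms])
  also have "\<dots> = - of_int (?P1 * ?Q0 - ?P0 * ?Q1)"
    by (simp add: algebra_simps)
  also have "\<dots> = (-1) ^ k"
    by (simp only: conv_num_den_det) simp
  finally show ?thesis .
qed

lemma abs_conv_error:
  assumes "\<xi> \<notin> \<rat>"
  shows "\<bar>of_int (conv_den \<xi> (Suc k)) * \<xi> - of_int (conv_num \<xi> (Suc k))\<bar> = 1 / conv_err_den \<xi> k"
  using arg_cong[OF conv_error[OF assms, of k], of abs] conv_err_den_pos[OF assms, of k]
  by (simp add: abs_mult eq_divide_eq)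

text \<open>Write (p, q) = u (P1, Q1) + v (P2, Q2) in the unimodular basis. Since 0 < q < Q2,
  u \<noteq> 0 and u v \<le> 0; as the two basis errors have opposite signs, the two terms of
  q \<xi> - p = u (Q1 \<xi> - P1) + v (Q2 \<xi> - P2) do not cancel.\<close>

lemma unimodular_best_approximation:
  fixes P1 Q1 P2 Q2 p q :: int and \<xi> :: real
  assumes det: "\<bar>P2 * Q1 - P1 * Q2\<bar> = 1"
    and opposite: "(of_int Q1 * \<xi> - of_int P1) * (of_int Q2 * \<xi> - of_int P2) < 0"
    and "0 < Q1" and "0 < q" and "q < Q2"
  shows "\<bar>of_int Q1 * \<xi> - of_int P1\<bar> \<le> \<bar>of_int q * \<xi> - of_int p\<bar>"
proof -
  define d where "d = P2 * Q1 - P1 * Q2"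
  define u where "u = d * (q * P2 - p * Q2)"
  define v where "v = d * (p * Q1 - q * P1)"
  have "d * d = 1" using det unfolding d_def by (metis abs_mult_self_eq mult_1)
  then have pq: "p = u * P1 + v * P2" "q = u * Q1 + v * Q2"
    unfolding u_def v_def d_def by algebra+
  have "u \<noteq> 0"
  proof
    assume "u = 0"
    then have "q = v * Q2" using pq by simp
    with \<open>0 < q\<close> \<open>q < Q2\<close> show False
      by (metis int_one_le_iff_zero_less zero_less_mult_iff mult.commute linorder_linear
          mult_le_cancel_left1 order_less_not_sym order_le_imp_less_or_eq)
  qed
  have "u * v \<le> 0"
  proof (rule ccontr)
    assume "\<not> u * v \<le> 0"
    then have "(u > 0 \<and> v > 0) \<or> (u < 0 \<and> v < 0)" using zero_less_mult_iff[of u v] by linarith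
    with pq(2) \<open>0 < Q1\<close> \<open>0 < q\<close> \<open>q < Q2\<close> show False
      by (smt (verit, best) mult_le_cancel_right1 mult_pos_pos mult_neg_pos)
  qed
  define e1 where "e1 = of_int Q1 * \<xi> - of_int P1"
  define e2 where "e2 = of_int Q2 * \<xi> - of_int P2"
  have "of_int q * \<xi> - of_int p = of_int u * e1 + of_int v * e2"
    unfolding e1_def e2_def pq by (simp add: algebra_simps)
  moreover have "(of_int u * e1) * (of_int v * e2) \<ge> 0"
  proof -
    have "e1 * e2 < 0" using opposite unfolding e1_def e2_def .
    moreover have "of_int (u * v) \<le> (0::real)" using \<open>u * v \<le> 0\<close> by linarith
    ultimately have "of_int (u * v) * (e1 * e2) \<ge> 0"
      by (intro mult_nonpos_nonpos) auto
    then show ?thesis by (simp add: ac_simps)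
  qed
  ultimately have "\<bar>of_int q * \<xi> - of_int p\<bar> = \<bar>of_int u * e1\<bar> + \<bar>of_int v * e2\<bar>"
    by (smt (verit) mult_less_0_iff)
  moreover have "\<bar>e1\<bar> \<le> \<bar>of_int u * e1\<bar>"
  proof -
    have "1 \<le> \<bar>real_of_int u\<bar>" using \<open>u \<noteq> 0\<close> by linarith
    then show ?thesis by (simp add: abs_mult mult_le_cancel_right1)
  qed
  ultimately show ?thesis unfolding e1_def by simp
qed

lemma conv_best_approximation:
  assumes "\<xi> \<notin> \<rat>" and "0 < q" and "q < conv_den \<xi> (Suc (Suc k))"
  shows "\<bar>of_int (conv_den \<xi> (Suc k)) * \<xi> - of_int (conv_num \<xi> (Suc k))\<bar>
       \<le> \<bar>of_int q * \<xi> - of_int p\<bar>"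
proof (rule unimodular_best_approximation)
  show "\<bar>conv_num \<xi> (Suc (Suc k)) * conv_den \<xi> (Suc k) - conv_num \<xi> (Suc k) * conv_den \<xi> (Suc (Suc k))\<bar> = 1"
    using conv_num_den_det[of \<xi> "Suc k"] by simp
  let ?e = "\<lambda>j. of_int (conv_den \<xi> (Suc j)) * \<xi> - of_int (conv_num \<xi> (Suc j))"
  have "?e k * ?e (Suc k) * (conv_err_den \<xi> k * conv_err_den \<xi> (Suc k))
      = (?e k * conv_err_den \<xi> k) * (?e (Suc k) * conv_err_den \<xi> (Suc k))"
    by (simp only: ac_simps)
  also have "\<dots> = (-1) ^ (k + Suc k)"
    by (simp only: conv_error[OF assms(1)] power_add)
  also have "\<dots> = -1" by simp
  finally have "?e k * ?e (Suc k) * (conv_err_den \<xi> k * conv_err_den \<xi> (Suc k)) = -1" .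
  moreover have "conv_err_den \<xi> k * conv_err_den \<xi> (Suc k) > 0"
    using conv_err_den_pos[OF assms(1)] by simp
  ultimately show "?e k * ?e (Suc k) < 0"
    by (smt (verit) mult_nonneg_nonneg)
  show "0 < conv_den \<xi> (Suc k)" using conv_den_pos[OF assms(1), of k] by simp
qed (use assms in auto)

lemma diophantine_set_iff_convergents:
  assumes "\<xi> \<notin> \<rat>" and "\<gamma> > 0" and "\<tau> \<ge> 0"
  shows "\<xi> \<in> diophantine_set \<gamma> \<tau> \<longleftrightarrow>
    (\<forall>k. \<gamma> / real_of_int (conv_den \<xi> (Suc k)) powr \<tau>
         \<le> \<bar>of_int (conv_den \<xi> (Suc k)) * \<xi> - of_int (conv_num \<xi> (Suc k))\<bar>)"
    (is "_ \<longleftrightarrow> (\<forall>k. ?conv k)")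
proof
  assume "\<xi> \<in> diophantine_set \<gamma> \<tau>"
  show "\<forall>k. ?conv k"
  proof
    fix k
    have "nat (conv_den \<xi> (Suc k)) \<ge> 1" "real (nat (conv_den \<xi> (Suc k))) = of_int (conv_den \<xi> (Suc k))"
      using conv_den_pos[OF assms(1), of k] by auto
    with \<open>\<xi> \<in> diophantine_set \<gamma> \<tau>\<close> show "?conv k"
      unfolding diophantine_set_def by (force simp: mult.commute)
  qed
next
  assume conv: "\<forall>k. ?conv k"
  show "\<xi> \<in> diophantine_set \<gamma> \<tau>"
    unfolding diophantine_set_def
  proof (intro CollectI allI impI)
    fix p :: int and q :: nat
    assume "q \<ge> 1"
    then obtain k where below: "conv_den \<xi> (Suc k) \<le> int q"
      and above: "int q < conv_den \<xi> (Suc (Suc k))"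
      using conv_den_bracket[OF assms(1), of "int q"] by auto
    have "real_of_int (conv_den \<xi> (Suc k)) \<ge> 1" using conv_den_pos[OF assms(1), of k] by simp
    then have "\<gamma> / real q powr \<tau> \<le> \<gamma> / real_of_int (conv_den \<xi> (Suc k)) powr \<tau>"
      using below assms(2,3) by (intro divide_left_mono powr_mono2) auto
    also have "\<dots> \<le> \<bar>of_int (conv_den \<xi> (Suc k)) * \<xi> - of_int (conv_num \<xi> (Suc k))\<bar>"
      using conv by blast
    also have "\<dots> \<le> \<bar>\<xi> * real q - real_of_int p\<bar>"
      using conv_best_approximation[OF assms(1) _ above, of p] \<open>q \<ge> 1\<close> by (simp add: mult.commute)
    finally show "\<gamma> / real q powr \<tau> \<le> \<bar>\<xi> * real q - real_of_int p\<bar>" .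
  qed
qed

lemma powr_condition_iff:
  fixes Q Q' X \<gamma> \<tau> :: real
  assumes "Q > 0" and "X > 0" and "Q' \<ge> 0" and "\<gamma> > 0"
  shows "Q' / Q powr \<tau> + 1 / (X * Q powr (\<tau> - 1)) \<le> 1 / \<gamma>
     \<longleftrightarrow> \<gamma> / Q powr \<tau> \<le> 1 / (Q' + Q / X)"
proof -
  have "Q powr \<tau> = Q * Q powr (\<tau> - 1)"
    using assms(1) by (simp add: powr_diff)
  moreover have "Q powr (\<tau> - 1) > 0" "Q' + Q / X > 0"
    using assms by (auto simp: add_nonneg_pos)
  ultimately show ?thesis using assms by (simp add: field_simps)
qed

lemma cf_condition_iff_conv_error:
  assumes "\<xi> \<notin> \<rat>" and "\<gamma> > 0"
  shows "real_of_int (cf_q \<xi> (k + 1)) / (real_of_int (cf_q \<xi> k) powr \<tau>)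
       + 1 / (cf_complete \<xi> (k + 2) * real_of_int (cf_q \<xi> k) powr (\<tau> - 1)) \<le> 1 / \<gamma>
    \<longleftrightarrow> \<gamma> / real_of_int (conv_den \<xi> (Suc k)) powr \<tau>
         \<le> \<bar>of_int (conv_den \<xi> (Suc k)) * \<xi> - of_int (conv_num \<xi> (Suc k))\<bar>"
proof -
  have "real_of_int (conv_den \<xi> (Suc k)) > 0"
    using conv_den_pos[OF assms(1), of k] by simp
  moreover have "real_of_int (conv_den \<xi> (Suc (Suc k))) \<ge> 0"
    using conv_den_nonneg[OF assms(1), of "Suc (Suc k)"] by (simp del: conv_den.simps)
  moreover have "cf_complete \<xi> (Suc (Suc k)) > 0"
    using cf_complete_gt_1[OF assms(1)] by (meson less_trans zero_less_one)
  ultimately show ?thesis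
    using powr_condition_iff[OF _ _ _ assms(2)]
    by (simp add: cf_q_eq_conv_den abs_conv_error[OF assms(1)] conv_err_den_eq
             del: conv_den.simps)
qed

theorem mainTheorem2:
  fixes \<gamma> \<tau> \<xi> :: real
  assumes "\<gamma> > 0" and "\<tau> \<ge> 1" and "\<xi> \<notin> \<rat>"
  shows "\<xi> \<in> diophantine_set \<gamma> \<tau> \<longleftrightarrow>
    (\<forall>k::nat.
       real_of_int (cf_q \<xi> (k + 1)) / (real_of_int (cf_q \<xi> k) powr \<tau>)
       + 1 / (cf_complete \<xi> (k + 2) * real_of_int (cf_q \<xi> k) powr (\<tau> - 1))
       \<le> 1 / \<gamma>)"
  using diophantine_set_iff_convergents[OF assms(3,1)] cf_condition_iff_conv_error[OF assms(3,1)]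
    assms(2) by simp

end
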